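(* Let $G$ be a graph on $n\ge 1$ vertices and let $s\ge 1$ be an integer. (1) For $x>\lambda(G)$ put $\beta_G(x)=\frac{s}{x}\chi_G(x)$. Then $\beta_G$ is strictly decreasing on $(\lambda(G),\infty)$, and $\lambda(\overline{K}_s\vee G)$ is the unique $x>\lambda(G)$ satisfying $\beta_G(x)=1$. (2) We have \[ \lambda(\overline{K}_s\vee G)\le \frac{\lambda(G)+\sqrt{\lambda(G)^2+4ns}}{2}, \] with equality if $G$ is regular.
   Context: $\lambda(\cdot)$ is the spectral radius of the adjacency matrix $A(\cdot)$. For $x>\lambda(G)$, the coronal of $G$ is $\chi_G(x)=\mathbf{1}^{\mathrm T}(xI-A(G))^{-1}\mathbf{1}$, the sum of all entries of $(xI-A(G))^{-1}$. $\overline{K}_s$ is the edgeless graph on $s$ vertices and $\vee$ denotes the join (disjoint union plus all edges between the two graphs). *)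

theory Defs
  imports Complex_Main "Jordan_Normal_Form.Spectral_Radius"
begin

definition simple_graph :: "nat \<Rightarrow> (nat \<Rightarrow> nat \<Rightarrow> bool) \<Rightarrow> bool" where
  "simple_graph n E \<longleftrightarrow> (\<forall>i<n. \<forall>j<n. E i j \<longleftrightarrow> E j i) \<and> (\<forall>i<n. \<not> E i i)"

definition adj_matrix :: "nat \<Rightarrow> (nat \<Rightarrow> nat \<Rightarrow> bool) \<Rightarrow> real mat" where
  "adj_matrix n E = mat n n (\<lambda>(i, j). if E i j then 1 else 0)"

definition graph_spectral_radius :: "nat \<Rightarrow> (nat \<Rightarrow> nat \<Rightarrow> bool) \<Rightarrow> real" where
  "graph_spectral_radius n E = spectral_radius (map_mat complex_of_real (adj_matrix n E))"

definition mat_inv :: "nat \<Rightarrow> real mat \<Rightarrow> real mat" where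
  "mat_inv n M = (THE B. B \<in> carrier_mat n n \<and> M * B = 1\<^sub>m n \<and> B * M = 1\<^sub>m n)"

definition coronal :: "nat \<Rightarrow> (nat \<Rightarrow> nat \<Rightarrow> bool) \<Rightarrow> real \<Rightarrow> real" where
  "coronal n E x = (let B = mat_inv n (x \<cdot>\<^sub>m 1\<^sub>m n - adj_matrix n E)
                     in \<Sum>i<n. \<Sum>j<n. B $$ (i, j))"

text \<open>Join of the edgeless graph on s vertices (vertices 0..<s) with G on n vertices
  (G's vertex i becomes vertex s + i); the result has s + n vertices.\<close>
definition join_edgeless :: "nat \<Rightarrow> (nat \<Rightarrow> nat \<Rightarrow> bool) \<Rightarrow> nat \<Rightarrow> nat \<Rightarrow> bool" where
  "join_edgeless s E i j \<longleftrightarrow>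
     (i < s \<and> s \<le> j) \<or> (s \<le> i \<and> j < s) \<or> (s \<le> i \<and> s \<le> j \<and> E (i - s) (j - s))"

definition regular_graph :: "nat \<Rightarrow> (nat \<Rightarrow> nat \<Rightarrow> bool) \<Rightarrow> bool" where
  "regular_graph n E \<longleftrightarrow> (\<exists>k. \<forall>i<n. card {j. j < n \<and> E i j} = k)"

end

theory Submission
  imports Defs "HOL-Analysis.Convex"
begin

(* Write A for the adjacency matrix of G and r for lambda(G), and for x > r let w_x = (xI - A)^{-1} 1,
   so that chi_G(x) is the sum of the entries of w_x. Since A is symmetric, |A v| <= r |v|: otherwise
   the squared norms of A^k v, which are log-convex by Cauchy-Schwarz, would outgrow the bound C x^k
   (any x > r) on the entries of A^k that the Jordan normal form provides. Hence
   <v, (xI - A) v> >= (x - r) |v|^2, which makes w_x unique and gives 0 < chi_G(x) <= n / (x - r)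
   (Cauchy-Schwarz again) as well as the strict decrease of chi_G(x) / x.
   Let rho = lambda(K_s v G). A test vector in the Rayleigh quotient of the join shows rho > r. A
   nonnegative eigenvector P of the join for rho is constant on the s independent vertices, and its
   restriction to G is c w_rho, where c is the mass of P on the independent set; comparing masses gives
   s chi_G(rho) = rho, i.e. beta_G(rho) = 1. The bound on rho is chi_G(rho) <= n / (rho - r) rewritten as
   rho (rho - r) <= n s; for k-regular G one has r = k and w_x is constant, so equality holds. *)

section \<open>Vectors and matrices as functions\<close>

(* Vectors and matrices of size n are real functions on nat; only arguments below n matter. *)

definition dot :: "nat \<Rightarrow> (nat \<Rightarrow> real) \<Rightarrow> (nat \<Rightarrow> real) \<Rightarrow> real" where
  "dot n u v = (\<Sum>i<n. u i * v i)"

definition matvec :: "nat \<Rightarrow> (nat \<Rightarrow> nat \<Rightarrow> real) \<Rightarrow> (nat \<Rightarrow> real) \<Rightarrow> nat \<Rightarrow> real" where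
  "matvec n a v i = (\<Sum>j<n. a i j * v j)"

definition symmetric_on :: "nat \<Rightarrow> (nat \<Rightarrow> nat \<Rightarrow> real) \<Rightarrow> bool" where
  "symmetric_on n a \<longleftrightarrow> (\<forall>i<n. \<forall>j<n. a i j = a j i)"

lemma dot_commute: "dot n u v = dot n v u"
  by (simp add: dot_def mult.commute)

lemma dot_self_nonneg: "0 \<le> dot n u u"
  by (simp add: dot_def sum_nonneg)

lemma dot_self_eq_0D: "dot n u u = 0 \<Longrightarrow> i < n \<Longrightarrow> u i = 0"
  unfolding dot_def using sum_nonneg_eq_0_iff[of "{..<n}" "\<lambda>i. u i * u i"] by auto

lemma dot_self_pos: "i < n \<Longrightarrow> u i \<noteq> 0 \<Longrightarrow> 0 < dot n u u"
  using dot_self_nonneg[of n u] dot_self_eq_0D[of n u i] by fastforce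

lemma dot_cauchy_schwarz: "(dot n u v)\<^sup>2 \<le> dot n u u * dot n v v"
  using Cauchy_Schwarz_ineq_sum[of u v "{..<n}"] by (simp add: dot_def power2_eq_square)

lemma dot_cong:
  "(\<And>i. i < n \<Longrightarrow> u i = u' i) \<Longrightarrow> (\<And>i. i < n \<Longrightarrow> v i = v' i) \<Longrightarrow> dot n u v = dot n u' v'"
  by (simp add: dot_def)

lemma dot_diff_left: "dot n (\<lambda>i. u i - w i) v = dot n u v - dot n w v"
  by (simp add: dot_def algebra_simps sum_subtractf)

lemma dot_scale_diff_right: "dot n v (\<lambda>i. x * u i - w i) = x * dot n v u - dot n v w"
  by (simp add: dot_def algebra_simps sum_subtractf sum_distrib_left)

lemma dot_self_diff_scaled:
  "dot n (\<lambda>i. f i - c * g i) (\<lambda>i. f i - c * g i) = dot n f f - 2 * c * dot n f g + c\<^sup>2 * dot n g g"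
proof -
  have "dot n (\<lambda>i. f i - c * g i) (\<lambda>i. f i - c * g i)
      = (\<Sum>i<n. f i * f i - 2 * c * (f i * g i) + c\<^sup>2 * (g i * g i))"
    unfolding dot_def by (intro sum.cong) (auto simp: algebra_simps power2_eq_square)
  also have "\<dots> = dot n f f - 2 * c * dot n f g + c\<^sup>2 * dot n g g"
    by (simp add: dot_def sum.distrib sum_subtractf sum_distrib_left)
  finally show ?thesis .
qed

lemma matvec_diff: "matvec n a (\<lambda>j. u j - w j) i = matvec n a u i - matvec n a w i"
  by (simp add: matvec_def algebra_simps sum_subtractf)

lemma dot_matvec_symmetric:
  assumes "symmetric_on n a"
  shows "dot n (matvec n a u) w = dot n u (matvec n a w)"
proof -
  have "dot n (matvec n a u) w = (\<Sum>i<n. \<Sum>j<n. a i j * u j * w i)"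
    by (simp add: dot_def matvec_def sum_distrib_right)
  also have "\<dots> = (\<Sum>j<n. \<Sum>i<n. a i j * u j * w i)"
    by (rule sum.swap)
  also have "\<dots> = (\<Sum>j<n. \<Sum>i<n. u j * (a j i * w i))"
    using assms by (intro sum.cong refl) (auto simp: symmetric_on_def)
  also have "\<dots> = dot n u (matvec n a w)"
    by (simp add: dot_def matvec_def sum_distrib_left)
  finally show ?thesis .
qed

lemma sum_diag_minus_mult:
  assumes "i < n"
  shows "(\<Sum>k<n. ((if i = k then x else 0) - a i k) * f k) = x * f i - matvec n a f i"
proof -
  have "(\<Sum>k<n. ((if i = k then x else 0) - a i k) * f k)
      = (\<Sum>k<n. (if i = k then x * f k else 0)) - (\<Sum>k<n. a i k * f k)"
    by (simp add: left_diff_distrib sum_subtractf if_distrib[of "\<lambda>y. y * _"] cong: if_cong)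
  also have "\<dots> = x * f i - matvec n a f i"
    using assms by (simp add: matvec_def)
  finally show ?thesis .
qed

lemma sum_lessThan_add_split:
  fixes s n :: nat
  shows "(\<Sum>i<s + n. f i) = (\<Sum>i<s. f i) + (\<Sum>i<n. f (s + i))"
  by (induction n) (auto simp: add.assoc)

section \<open>The resolvent of a symmetric matrix of bounded norm\<close>

lemma mat_inv_eqI:
  fixes A B :: "real mat"
  assumes A: "A \<in> carrier_mat n n" and B: "B \<in> carrier_mat n n"
    and AB: "A * B = 1\<^sub>m n" and BA: "B * A = 1\<^sub>m n"
  shows "mat_inv n A = B"
  unfolding mat_inv_def
proof (rule the_equality)
  fix B' assume "B' \<in> carrier_mat n n \<and> A * B' = 1\<^sub>m n \<and> B' * A = 1\<^sub>m n"
  then have B': "B' \<in> carrier_mat n n" and B'A: "B' * A = 1\<^sub>m n"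
    by auto
  have "B' = B' * (A * B)"
    using AB B' by simp
  also have "\<dots> = (B' * A) * B"
    using B' A B by (simp add: assoc_mult_mat)
  also have "\<dots> = B"
    using B'A B by simp
  finally show "B' = B" .
qed (use assms in auto)

lemma mat_inv_right:
  fixes A :: "real mat"
  assumes A: "A \<in> carrier_mat n n" and "det A \<noteq> 0"
  shows "mat_inv n A \<in> carrier_mat n n" and "A * mat_inv n A = 1\<^sub>m n"
proof -
  have "A \<in> Units (ring_mat TYPE(real) n undefined)"
    by (rule det_non_zero_imp_unit[OF assms])
  then obtain B where B: "B \<in> carrier_mat n n" "B * A = 1\<^sub>m n" "A * B = 1\<^sub>m n"
    unfolding Units_def ring_mat_def by auto
  with mat_inv_eqI[OF A B(1) B(3) B(2)]
  show "mat_inv n A \<in> carrier_mat n n" and "A * mat_inv n A = 1\<^sub>m n"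
    by simp_all
qed

(* The lemmas named resolvent_... are about solutions w of x w - A w = 1, i.e. w = (xI - A)^{-1} 1. *)

locale symmetric_bounded =
  fixes n :: nat and a :: "nat \<Rightarrow> nat \<Rightarrow> real" and r :: real
  assumes symmetric: "symmetric_on n a"
    and bound_nonneg: "0 \<le> r"
    and norm_bound: "dot n (matvec n a v) (matvec n a v) \<le> r\<^sup>2 * dot n v v"
begin

lemma abs_dot_matvec_le: "\<bar>dot n v (matvec n a v)\<bar> \<le> r * dot n v v"
proof -
  have "(dot n v (matvec n a v))\<^sup>2 \<le> dot n v v * dot n (matvec n a v) (matvec n a v)"
    by (rule dot_cauchy_schwarz)
  also have "\<dots> \<le> dot n v v * (r\<^sup>2 * dot n v v)"
    using norm_bound dot_self_nonneg by (rule mult_left_mono)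
  also have "\<dots> = (r * dot n v v)\<^sup>2"
    by (simp add: power2_eq_square)
  finally have "\<bar>dot n v (matvec n a v)\<bar>\<^sup>2 \<le> (r * dot n v v)\<^sup>2"
    by simp
  moreover have "0 \<le> r * dot n v v"
    using bound_nonneg dot_self_nonneg by (rule mult_nonneg_nonneg)
  ultimately show ?thesis
    by (rule power2_le_imp_le)
qed

lemma dot_shift_ge: "(x - r) * dot n v v \<le> dot n v (\<lambda>i. x * v i - matvec n a v i)"
proof -
  have "dot n v (matvec n a v) \<le> r * dot n v v"
    using abs_dot_matvec_le[of v] by linarith
  then show ?thesis
    by (simp add: dot_scale_diff_right left_diff_distrib)
qed

lemma shift_kernel_trivial:
  assumes x: "r < x" and ker: "\<And>i. i < n \<Longrightarrow> x * v i - matvec n a v i = 0" and "i < n"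
  shows "v i = 0"
proof -
  have "dot n v (\<lambda>i. x * v i - matvec n a v i) = 0"
    by (simp add: dot_def ker)
  with dot_shift_ge[of x v] have "(x - r) * dot n v v \<le> 0"
    by simp
  with x dot_self_nonneg[of n v] have "dot n v v = 0"
    by (simp add: mult_le_0_iff)
  then show ?thesis
    using dot_self_eq_0D \<open>i < n\<close> by blast
qed

lemma resolvent_unique:
  assumes x: "r < x"
    and w: "\<And>i. i < n \<Longrightarrow> x * w i - matvec n a w i = 1"
    and w': "\<And>i. i < n \<Longrightarrow> x * w' i - matvec n a w' i = 1" and "i < n"
  shows "w i = w' i"
proof -
  have "(\<lambda>j. w j - w' j) i = 0"
  proof (rule shift_kernel_trivial[OF x _ \<open>i < n\<close>])
    fix j assume "j < n"
    with w w' show "x * (w j - w' j) - matvec n a (\<lambda>j. w j - w' j) j = 0"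
      by (simp add: matvec_diff algebra_simps)
  qed
  then show ?thesis
    by simp
qed

lemma resolvent_dot_pos:
  assumes w: "\<And>i. i < n \<Longrightarrow> x * w i - matvec n a w i = 1" and n: "0 < n"
  shows "0 < dot n w w"
proof (rule ccontr)
  assume "\<not> 0 < dot n w w"
  then have "dot n w w = 0"
    using dot_self_nonneg[of n w] by simp
  then have "\<And>i. i < n \<Longrightarrow> w i = 0"
    using dot_self_eq_0D by blast
  then have "w 0 = 0" and "matvec n a w 0 = 0"
    using n by (simp_all add: matvec_def)
  with w[OF n] show False
    by simp
qed

lemma resolvent_sum_ge:
  assumes w: "\<And>i. i < n \<Longrightarrow> x * w i - matvec n a w i = 1"
  shows "(x - r) * dot n w w \<le> (\<Sum>i<n. w i)"
proof -
  have "(\<Sum>i<n. w i) = dot n w (\<lambda>i. x * w i - matvec n a w i)"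
    unfolding dot_def by (rule sum.cong) (auto simp: w)
  with dot_shift_ge[of x w] show ?thesis
    by simp
qed

lemma resolvent_sum_pos:
  assumes x: "r < x" and w: "\<And>i. i < n \<Longrightarrow> x * w i - matvec n a w i = 1" and n: "0 < n"
  shows "0 < (\<Sum>i<n. w i)"
proof -
  have "0 < (x - r) * dot n w w"
    using x resolvent_dot_pos[OF w n] by simp
  then show ?thesis
    using resolvent_sum_ge[OF w] by linarith
qed

lemma resolvent_sum_le:
  assumes x: "r < x" and w: "\<And>i. i < n \<Longrightarrow> x * w i - matvec n a w i = 1" and n: "0 < n"
  shows "(\<Sum>i<n. w i) \<le> real n / (x - r)"
proof -
  define S where "S = (\<Sum>i<n. w i)"
  have S: "0 < S"
    unfolding S_def by (rule resolvent_sum_pos[OF x w n])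
  have "S * S = (dot n (\<lambda>_. 1) w)\<^sup>2"
    by (simp add: S_def dot_def power2_eq_square)
  also have "\<dots> \<le> dot n (\<lambda>_. 1) (\<lambda>_. 1) * dot n w w"
    by (rule dot_cauchy_schwarz)
  also have "\<dots> = real n * dot n w w"
    by (simp add: dot_def)
  also have "\<dots> \<le> real n * (S / (x - r))"
    using resolvent_sum_ge[OF w] x by (intro mult_left_mono) (simp_all add: S_def pos_le_divide_eq mult.commute)
  also have "\<dots> = S * (real n / (x - r))"
    by simp
  finally have "S * S \<le> S * (real n / (x - r))" .
  then have "S \<le> real n / (x - r)"
    using S by (rule mult_left_le_imp_le)
  then show ?thesis
    by (simp add: S_def)
qed

lemma resolvent_sum_strict_decreasing:
  assumes x: "r < x" and xy: "x < y" and n: "0 < n"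
    and u: "\<And>i. i < n \<Longrightarrow> x * u i - matvec n a u i = 1"
    and z: "\<And>i. i < n \<Longrightarrow> y * z i - matvec n a z i = 1"
  shows "(\<Sum>i<n. z i) < (\<Sum>i<n. u i)"
proof -
  \<comment> \<open>by symmetry the difference of the sums is (y - x) <u, z>, and <u - z, z> \<ge> 0 by coercivity\<close>
  have Su: "(\<Sum>i<n. u i) = dot n u (\<lambda>i. y * z i - matvec n a z i)"
    unfolding dot_def by (rule sum.cong) (auto simp: z)
  have Sz: "(\<Sum>i<n. z i) = dot n z (\<lambda>i. x * u i - matvec n a u i)"
    unfolding dot_def by (rule sum.cong) (auto simp: u)
  have "dot n z (matvec n a u) = dot n u (matvec n a z)"
    using dot_matvec_symmetric[OF symmetric, of z u] dot_commute[of n "matvec n a z" u] by simp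
  then have diff: "(\<Sum>i<n. u i) - (\<Sum>i<n. z i) = (y - x) * dot n u z"
    using Su Sz dot_commute[of n z u] by (simp add: dot_scale_diff_right algebra_simps)
  define d where "d = (\<lambda>i. u i - z i)"
  have "x * d i - matvec n a d i = (y - x) * z i" if "i < n" for i
    using u[OF that] z[OF that] by (simp add: d_def matvec_diff algebra_simps)
  then have "dot n d (\<lambda>i. x * d i - matvec n a d i) = (y - x) * dot n d z"
    by (simp add: dot_def sum_distrib_left mult_ac)
  with dot_shift_ge[of x d] have "(x - r) * dot n d d \<le> (y - x) * dot n d z"
    by simp
  moreover have "0 \<le> (x - r) * dot n d d"
    using x dot_self_nonneg[of n d] by (intro mult_nonneg_nonneg) auto
  ultimately have "0 \<le> (y - x) * dot n d z"
    by linarith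
  then have "0 \<le> dot n d z"
    using xy by (simp add: zero_le_mult_iff)
  moreover have "dot n u z = dot n z z + dot n d z"
    by (simp add: d_def dot_diff_left)
  ultimately have "0 < dot n u z"
    using resolvent_dot_pos[OF z n] by simp
  then have "0 < (y - x) * dot n u z"
    using xy by simp
  with diff show ?thesis
    by linarith
qed

lemma det_shift_nonzero:
  assumes x: "r < x"
  shows "det (x \<cdot>\<^sub>m 1\<^sub>m n - mat n n (\<lambda>(i, j). a i j)) \<noteq> 0"
proof
  let ?M = "x \<cdot>\<^sub>m 1\<^sub>m n - mat n n (\<lambda>(i, j). a i j)"
  have M: "?M \<in> carrier_mat n n"
    by auto
  assume "det ?M = 0"
  then obtain v where v: "v \<in> carrier_vec n" "v \<noteq> 0\<^sub>v n" "?M *\<^sub>v v = 0\<^sub>v n"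
    using det_0_iff_vec_prod_zero[OF M] by auto
  have "x * v $ i - matvec n a (\<lambda>j. v $ j) i = 0" if i: "i < n" for i
  proof -
    have "0 = (?M *\<^sub>v v) $ i"
      using v(3) i by simp
    also have "\<dots> = (\<Sum>j<n. ((if i = j then x else 0) - a i j) * v $ j)"
      using i v(1) by (auto simp: scalar_prod_def atLeast0LessThan intro!: sum.cong)
    also have "\<dots> = x * v $ i - matvec n a (\<lambda>j. v $ j) i"
      by (rule sum_diag_minus_mult[OF i])
    finally show ?thesis
      by simp
  qed
  then have "v $ i = 0" if "i < n" for i
    using shift_kernel_trivial[OF x, of "\<lambda>j. v $ j"] that by blast
  then have "v = 0\<^sub>v n"
    using v(1) by (intro eq_vecI) auto
  with v(2) show False
    by simp
qed

lemma mat_inv_row_sums_solve: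
  assumes x: "r < x" and i: "i < n"
  defines "w \<equiv> \<lambda>k. \<Sum>j<n. mat_inv n (x \<cdot>\<^sub>m 1\<^sub>m n - mat n n (\<lambda>(i, j). a i j)) $$ (k, j)"
  shows "x * w i - matvec n a w i = 1"
proof -
  define M where "M = x \<cdot>\<^sub>m 1\<^sub>m n - mat n n (\<lambda>(i, j). a i j)"
  define B where "B = mat_inv n M"
  have M: "M \<in> carrier_mat n n"
    unfolding M_def by auto
  have B: "B \<in> carrier_mat n n" "M * B = 1\<^sub>m n"
    using mat_inv_right[OF M det_shift_nonzero[OF x, folded M_def]] by (simp_all add: B_def)
  have "1 = (\<Sum>j<n. (M * B) $$ (i, j))"
    using i B(2) by simp
  also have "\<dots> = (\<Sum>j<n. \<Sum>k<n. M $$ (i, k) * B $$ (k, j))"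
    using i M B(1) by (auto simp: scalar_prod_def atLeast0LessThan intro!: sum.cong)
  also have "\<dots> = (\<Sum>k<n. \<Sum>j<n. M $$ (i, k) * B $$ (k, j))"
    by (rule sum.swap)
  also have "\<dots> = (\<Sum>k<n. ((if i = k then x else 0) - a i k) * w k)"
    using i by (auto simp: M_def B_def w_def sum_distrib_left intro!: sum.cong)
  also have "\<dots> = x * w i - matvec n a w i"
    by (rule sum_diag_minus_mult[OF i])
  finally show ?thesis
    by simp
qed

lemma resolvent_exists:
  assumes "r < x"
  shows "\<exists>w. \<forall>i<n. x * w i - matvec n a w i = 1"
  by (intro exI[of _ "\<lambda>k. \<Sum>j<n. mat_inv n (x \<cdot>\<^sub>m 1\<^sub>m n - mat n n (\<lambda>(i, j). a i j)) $$ (k, j)"]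
      allI impI mat_inv_row_sums_solve[OF assms])

lemma abs_eigenvector:
  assumes nonneg: "\<And>i j. i < n \<Longrightarrow> j < n \<Longrightarrow> 0 \<le> a i j"
    and ev: "\<And>i. i < n \<Longrightarrow> matvec n a e i = \<mu> * e i" and \<mu>: "\<bar>\<mu>\<bar> = r" and "i < n"
  shows "matvec n a (\<lambda>j. \<bar>e j\<bar>) i = r * \<bar>e i\<bar>"
proof -
  define p where "p = (\<lambda>j. \<bar>e j\<bar>)"
  have "dot n e (matvec n a e) = (\<Sum>i<n. e i * (\<mu> * e i))"
    unfolding dot_def by (rule sum.cong) (auto simp: ev)
  also have "\<dots> = \<mu> * dot n e e"
    by (simp add: dot_def sum_distrib_left mult_ac)
  finally have "r * dot n p p = \<bar>dot n e (matvec n a e)\<bar>"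
    using \<mu> dot_self_nonneg[of n e] by (simp add: p_def dot_def abs_mult)
  also have "\<dots> = \<bar>\<Sum>i<n. \<Sum>j<n. e i * a i j * e j\<bar>"
    by (simp add: dot_def matvec_def sum_distrib_left mult_ac)
  also have "\<dots> \<le> (\<Sum>i<n. \<Sum>j<n. \<bar>e i * a i j * e j\<bar>)"
    by (rule order_trans[OF sum_abs]) (intro sum_mono sum_abs)
  also have "\<dots> = (\<Sum>i<n. \<Sum>j<n. p i * a i j * p j)"
    using nonneg by (intro sum.cong refl) (auto simp: p_def abs_mult)
  also have "\<dots> = dot n p (matvec n a p)"
    by (simp add: dot_def matvec_def sum_distrib_left mult_ac)
  finally have "r * dot n p p \<le> dot n p (matvec n a p)" .
  \<comment> \<open>p attains the bound r of the Rayleigh quotient, and this forces A p = r p\<close>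
  then have "r * (r * dot n p p) \<le> r * dot n p (matvec n a p)"
    using bound_nonneg by (rule mult_left_mono)
  then have "dot n (matvec n a p) (matvec n a p) - 2 * r * dot n (matvec n a p) p + r\<^sup>2 * dot n p p \<le> 0"
    using norm_bound[of p] dot_commute[of n "matvec n a p" p] by (simp add: power2_eq_square)
  then have "dot n (\<lambda>i. matvec n a p i - r * p i) (\<lambda>i. matvec n a p i - r * p i) \<le> 0"
    by (simp only: dot_self_diff_scaled)
  then have "dot n (\<lambda>i. matvec n a p i - r * p i) (\<lambda>i. matvec n a p i - r * p i) = 0"
    using dot_self_nonneg by (rule order.antisym)
  from dot_self_eq_0D[OF this \<open>i < n\<close>] show ?thesis
    by (simp add: p_def)
qed

end

section \<open>The norm bound given by the spectral radius\<close>

lemma log_convex_geometric_lower: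
  fixes N :: "nat \<Rightarrow> real"
  assumes log_convex: "\<And>k. (N (Suc k))\<^sup>2 \<le> N k * N (Suc (Suc k))"
    and N0: "0 < N 0" and q: "0 < q" and N1: "q * N 0 \<le> N 1"
  shows "q ^ k * N 0 \<le> N k"
proof -
  have step: "0 < N k \<and> q * N k \<le> N (Suc k)" for k
  proof (induction k)
    case 0
    show ?case
      using N0 N1 by simp
  next
    case (Suc k)
    then have pos: "0 < N k" and ratio: "q * N k \<le> N (Suc k)"
      by auto
    have pos': "0 < N (Suc k)"
      using pos ratio q by (smt (verit) mult_pos_pos)
    have "N k * (q * N (Suc k)) = (q * N k) * N (Suc k)"
      by simp
    also have "\<dots> \<le> N (Suc k) * N (Suc k)"
      using ratio pos' by (intro mult_right_mono) auto
    also have "\<dots> \<le> N k * N (Suc (Suc k))"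
      using log_convex[of k] by (simp add: power2_eq_square)
    finally have "q * N (Suc k) \<le> N (Suc (Suc k))"
      using pos by simp
    with pos' show ?case
      by simp
  qed
  show ?thesis
  proof (induction k)
    case (Suc k)
    have "q ^ Suc k * N 0 = q * (q ^ k * N 0)"
      by simp
    also have "\<dots> \<le> q * N k"
      using Suc q by (intro mult_left_mono) auto
    also have "\<dots> \<le> N (Suc k)"
      using step[of k] by simp
    finally show ?case .
  qed simp
qed

definition iterate_sqnorm :: "nat \<Rightarrow> (nat \<Rightarrow> nat \<Rightarrow> real) \<Rightarrow> (nat \<Rightarrow> real) \<Rightarrow> nat \<Rightarrow> real" where
  "iterate_sqnorm n a v k = dot n ((matvec n a ^^ k) v) ((matvec n a ^^ k) v)"

lemma iterate_sqnorm_log_convex: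
  assumes "symmetric_on n a"
  shows "(iterate_sqnorm n a v (Suc k))\<^sup>2 \<le> iterate_sqnorm n a v k * iterate_sqnorm n a v (Suc (Suc k))"
proof -
  let ?w = "(matvec n a ^^ k) v"
  have "iterate_sqnorm n a v (Suc k) = dot n ?w (matvec n a (matvec n a ?w))"
    using dot_matvec_symmetric[OF assms, of ?w "matvec n a ?w"] by (simp add: iterate_sqnorm_def)
  then show ?thesis
    using dot_cauchy_schwarz[of n ?w "matvec n a (matvec n a ?w)"] by (simp add: iterate_sqnorm_def)
qed

lemma iterate_sqnorm_le:
  assumes "\<And>k i. i < n \<Longrightarrow> \<bar>(matvec n a ^^ k) v i\<bar> \<le> C * x ^ k"
  shows "iterate_sqnorm n a v k \<le> real n * C\<^sup>2 * (x\<^sup>2) ^ k"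
proof -
  have "iterate_sqnorm n a v k = (\<Sum>i<n. ((matvec n a ^^ k) v i)\<^sup>2)"
    by (simp add: iterate_sqnorm_def dot_def power2_eq_square)
  also have "\<dots> \<le> (\<Sum>i<n. (C * x ^ k)\<^sup>2)"
  proof (intro sum_mono)
    fix i assume "i \<in> {..<n}"
    then have "\<bar>(matvec n a ^^ k) v i\<bar> \<le> \<bar>C * x ^ k\<bar>"
      using assms[of i k] by auto
    then show "((matvec n a ^^ k) v i)\<^sup>2 \<le> (C * x ^ k)\<^sup>2"
      using abs_le_square_iff by blast
  qed
  also have "\<dots> = real n * C\<^sup>2 * (x\<^sup>2) ^ k"
    by (simp add: power_mult_distrib power_mult[symmetric] mult.commute)
  finally show ?thesis .
qed

lemma norm_bound_of_iterate_growth: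
  assumes sym: "symmetric_on n a" and r: "0 \<le> r"
    and growth: "\<And>x. r < x \<Longrightarrow> \<exists>C. \<forall>k i. i < n \<longrightarrow> \<bar>(matvec n a ^^ k) v i\<bar> \<le> C * x ^ k"
  shows "dot n (matvec n a v) (matvec n a v) \<le> r\<^sup>2 * dot n v v"
proof (rule ccontr)
  define N where "N = iterate_sqnorm n a v"
  assume "\<not> ?thesis"
  then have gt: "r\<^sup>2 * N 0 < N 1"
    by (simp add: N_def iterate_sqnorm_def)
  have N0: "0 < N 0"
  proof (rule ccontr)
    assume "\<not> 0 < N 0"
    then have "dot n v v = 0"
      using dot_self_nonneg[of n v] by (simp add: N_def iterate_sqnorm_def)
    then have "\<And>i. i < n \<Longrightarrow> v i = 0"
      using dot_self_eq_0D by blast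
    then have "N 1 = 0" and "N 0 = 0"
      by (simp_all add: N_def iterate_sqnorm_def dot_def matvec_def)
    with gt show False
      by simp
  qed
  define q where "q = N 1 / N 0"
  have q: "r\<^sup>2 < q"
    using gt N0 by (simp add: q_def less_divide_eq)
  then have q0: "0 < q"
    by (smt (verit) zero_le_power2)
  have lower: "q ^ k * N 0 \<le> N k" for k
    using iterate_sqnorm_log_convex[OF sym] N0 q0
    by (intro log_convex_geometric_lower) (simp_all add: N_def q_def)
  define x where "x = (r + sqrt q) / 2"
  have "sqrt (r\<^sup>2) < sqrt q"
    using q by (rule real_sqrt_less_mono)
  then have rx: "r < x" and x0: "0 < x" and xq: "x < sqrt q"
    using r by (simp_all add: x_def)
  have "x\<^sup>2 < (sqrt q)\<^sup>2"
    using x0 xq by (intro power_strict_mono) auto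
  then have ratio: "1 < q / x\<^sup>2"
    using q0 x0 by simp
  obtain C where "\<And>k i. i < n \<Longrightarrow> \<bar>(matvec n a ^^ k) v i\<bar> \<le> C * x ^ k"
    using growth[OF rx] by blast
  note upper = iterate_sqnorm_le[OF this, folded N_def]
  obtain k where k: "real n * C\<^sup>2 / N 0 < (q / x\<^sup>2) ^ k"
    using real_arch_pow[OF ratio] by blast
  have "(q / x\<^sup>2) ^ k * (x\<^sup>2) ^ k * N 0 \<le> real n * C\<^sup>2 * (x\<^sup>2) ^ k"
    using lower[of k] upper[of k] x0 by (simp add: power_divide)
  then have "(q / x\<^sup>2) ^ k * N 0 \<le> real n * C\<^sup>2"
    using x0 by (simp add: mult.commute mult.left_commute)
  with k N0 show False
    by (simp add: divide_less_eq)
qed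

definition complex_mat :: "nat \<Rightarrow> (nat \<Rightarrow> nat \<Rightarrow> real) \<Rightarrow> complex mat" where
  "complex_mat n a = mat n n (\<lambda>(i, j). complex_of_real (a i j))"

lemma complex_mat_carrier [simp]: "complex_mat n a \<in> carrier_mat n n"
  by (simp add: complex_mat_def)

lemma dim_complex_mat [simp]:
  "dim_row (complex_mat n a) = n" "dim_col (complex_mat n a) = n"
  by (simp_all add: complex_mat_def)

lemma complex_mat_index [simp]: "i < n \<Longrightarrow> j < n \<Longrightarrow> complex_mat n a $$ (i, j) = complex_of_real (a i j)"
  by (simp add: complex_mat_def)

lemma spectral_radius_nonneg:
  assumes "A \<in> carrier_mat n n" and "0 < n"
  shows "0 \<le> spectral_radius A"
proof -
  obtain \<nu> where "spectral_radius A = cmod \<nu>"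
    using spectral_radius_mem_max(1)[OF assms] by auto
  then show ?thesis
    by simp
qed

lemma pow_smult_mat:
  fixes A :: "complex mat"
  assumes A: "A \<in> carrier_mat n n"
  shows "(c \<cdot>\<^sub>m A) ^\<^sub>m k = c ^ k \<cdot>\<^sub>m (A ^\<^sub>m k)"
proof (induction k)
  case 0
  show ?case
    using A by (intro eq_matI) auto
next
  case (Suc k)
  have "(c \<cdot>\<^sub>m A) ^\<^sub>m Suc k = (c ^ k \<cdot>\<^sub>m (A ^\<^sub>m k)) * (c \<cdot>\<^sub>m A)"
    using Suc by simp
  also have "\<dots> = c ^ k \<cdot>\<^sub>m (A ^\<^sub>m k * (c \<cdot>\<^sub>m A))"
    using A by (intro mult_smult_assoc_mat[of _ n n]) auto
  also have "\<dots> = c ^ k \<cdot>\<^sub>m (c \<cdot>\<^sub>m (A ^\<^sub>m k * A))"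
    using A by (subst mult_smult_distrib) auto
  also have "\<dots> = c ^ Suc k \<cdot>\<^sub>m (A ^\<^sub>m Suc k)"
    by (intro eq_matI) auto
  finally show ?case .
qed

lemma spectral_radius_scaled_less_1:
  fixes A :: "complex mat"
  assumes A: "A \<in> carrier_mat n n" and n: "0 < n" and x: "spectral_radius A < x"
  shows "spectral_radius (complex_of_real (1 / x) \<cdot>\<^sub>m A) < 1"
proof -
  define B where "B = complex_of_real (1 / x) \<cdot>\<^sub>m A"
  have x0: "0 < x"
    using spectral_radius_nonneg[OF A n] x by simp
  have B: "B \<in> carrier_mat n n"
    using A by (simp add: B_def)
  obtain \<nu> where \<nu>: "\<nu> \<in> spectrum B" and r: "spectral_radius B = cmod \<nu>"
    using spectral_radius_mem_max(1)[OF B n] by auto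
  then obtain w where "eigenvector B w \<nu>"
    unfolding spectrum_def eigenvalue_def by auto
  then have w: "w \<in> carrier_vec n" "w \<noteq> 0\<^sub>v n" and Bw: "B *\<^sub>v w = \<nu> \<cdot>\<^sub>v w"
    using B unfolding eigenvector_def by auto
  have "A *\<^sub>v w = (complex_of_real x * \<nu>) \<cdot>\<^sub>v w"
  proof (rule eq_vecI)
    fix i assume "i < dim_vec ((complex_of_real x * \<nu>) \<cdot>\<^sub>v w)"
    then have i: "i < n"
      using w by simp
    have "complex_of_real (1 / x) * (A *\<^sub>v w) $ i = (B *\<^sub>v w) $ i"
      using i A w by (auto simp: B_def scalar_prod_def sum_distrib_left mult.assoc intro!: sum.cong)
    also have "\<dots> = \<nu> * w $ i"
      using Bw i w by simp
    finally have "complex_of_real (1 / x) * (A *\<^sub>v w) $ i = \<nu> * w $ i" .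
    then have "complex_of_real x * (complex_of_real (1 / x) * (A *\<^sub>v w) $ i) = complex_of_real x * \<nu> * w $ i"
      by (simp add: mult.assoc)
    then show "(A *\<^sub>v w) $ i = ((complex_of_real x * \<nu>) \<cdot>\<^sub>v w) $ i"
      using i w x0 by (simp add: mult.assoc[symmetric] of_real_mult[symmetric])
  qed (use w A in simp)
  then have "eigenvector A w (complex_of_real x * \<nu>)"
    using w A unfolding eigenvector_def by simp
  then have "cmod (complex_of_real x * \<nu>) \<le> spectral_radius A"
    using spectral_radius_mem_max(2)[OF A n] unfolding spectrum_def eigenvalue_def by blast
  then have "x * cmod \<nu> \<le> spectral_radius A"
    using x0 by (simp add: norm_mult)
  then have "x * cmod \<nu> < x * 1"
    using x by linarith
  then have "cmod \<nu> < 1"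
    using x0 by (simp only: mult_less_cancel_left_pos)
  then show ?thesis
    using r unfolding B_def by simp
qed

lemma iterate_matvec_eq_pow_mat:
  assumes "i < n"
  shows "complex_of_real ((matvec n a ^^ k) u i)
    = (\<Sum>j<n. (complex_mat n a ^\<^sub>m k) $$ (i, j) * complex_of_real (u j))"
  using assms
proof (induction k arbitrary: u i)
  case 0
  have "(\<Sum>j<n. (complex_mat n a ^\<^sub>m 0) $$ (i, j) * complex_of_real (u j))
      = (\<Sum>j<n. if i = j then complex_of_real (u j) else 0)"
    using 0 by (intro sum.cong) auto
  also have "\<dots> = complex_of_real (u i)"
    using 0 by simp
  finally show ?case
    by simp
next
  case (Suc k)
  let ?A = "complex_mat n a"
  have "complex_of_real ((matvec n a ^^ Suc k) u i) = complex_of_real ((matvec n a ^^ k) (matvec n a u) i)"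
    by (simp only: funpow_Suc_right o_apply)
  also have "\<dots> = (\<Sum>j<n. (?A ^\<^sub>m k) $$ (i, j) * complex_of_real (matvec n a u j))"
    using Suc by blast
  also have "\<dots> = (\<Sum>j<n. \<Sum>l<n. (?A ^\<^sub>m k) $$ (i, j) * ?A $$ (j, l) * complex_of_real (u l))"
    by (auto simp: matvec_def sum_distrib_left mult.assoc intro!: sum.cong)
  also have "\<dots> = (\<Sum>l<n. \<Sum>j<n. (?A ^\<^sub>m k) $$ (i, j) * ?A $$ (j, l) * complex_of_real (u l))"
    by (rule sum.swap)
  also have "\<dots> = (\<Sum>l<n. (?A ^\<^sub>m Suc k) $$ (i, l) * complex_of_real (u l))"
  proof (intro sum.cong refl)
    fix l assume l: "l \<in> {..<n}"
    have "(?A ^\<^sub>m Suc k) $$ (i, l) = (\<Sum>j<n. (?A ^\<^sub>m k) $$ (i, j) * ?A $$ (j, l))"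
      using Suc.prems l by (auto simp: scalar_prod_def atLeast0LessThan intro!: sum.cong)
    then show "(\<Sum>j<n. (?A ^\<^sub>m k) $$ (i, j) * ?A $$ (j, l) * complex_of_real (u l))
        = (?A ^\<^sub>m Suc k) $$ (i, l) * complex_of_real (u l)"
      by (simp add: sum_distrib_right)
  qed
  finally show ?case .
qed

lemma iterate_matvec_growth:
  assumes n: "0 < n" and x: "spectral_radius (complex_mat n a) < x"
  shows "\<exists>C. \<forall>k i. i < n \<longrightarrow> \<bar>(matvec n a ^^ k) v i\<bar> \<le> C * x ^ k"
proof -
  let ?A = "complex_mat n a"
  define B where "B = complex_of_real (1 / x) \<cdot>\<^sub>m ?A"
  have x0: "0 < x"
    using spectral_radius_nonneg[OF complex_mat_carrier[of n a] n] x by simp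
  have B: "B \<in> carrier_mat n n"
    by (simp add: B_def)
  obtain c where c: "\<And>k. norm_bound (B ^\<^sub>m k) c"
    using spectral_radius_jnf_norm_bound_less_1_upper_triangular[OF B]
      spectral_radius_scaled_less_1[OF complex_mat_carrier n x] by (auto simp: B_def)
  have entry: "cmod ((?A ^\<^sub>m k) $$ (i, j)) \<le> x ^ k * c" if "i < n" "j < n" for k i j
  proof -
    have "(B ^\<^sub>m k) $$ (i, j) = (1 / complex_of_real x) ^ k * (?A ^\<^sub>m k) $$ (i, j)"
      using that by (simp add: B_def pow_smult_mat[OF complex_mat_carrier])
    then have "(?A ^\<^sub>m k) $$ (i, j) = complex_of_real x ^ k * (B ^\<^sub>m k) $$ (i, j)"
      using x0 by (simp add: power_one_over field_simps)
    then have "cmod ((?A ^\<^sub>m k) $$ (i, j)) = x ^ k * cmod ((B ^\<^sub>m k) $$ (i, j))"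
      using x0 by (simp add: norm_mult norm_power)
    also have "\<dots> \<le> x ^ k * c"
      using c[of k] that B x0 unfolding norm_bound_def by (intro mult_left_mono) auto
    finally show ?thesis .
  qed
  show ?thesis
  proof (intro exI[of _ "c * (\<Sum>j<n. \<bar>v j\<bar>)"] allI impI)
    fix k i assume i: "i < n"
    have "\<bar>(matvec n a ^^ k) v i\<bar> = cmod (complex_of_real ((matvec n a ^^ k) v i))"
      by simp
    also have "\<dots> = cmod (\<Sum>j<n. (?A ^\<^sub>m k) $$ (i, j) * complex_of_real (v j))"
      by (simp only: iterate_matvec_eq_pow_mat[OF i])
    also have "\<dots> \<le> (\<Sum>j<n. cmod ((?A ^\<^sub>m k) $$ (i, j)) * \<bar>v j\<bar>)"
      by (rule order_trans[OF norm_sum]) (simp add: norm_mult)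
    also have "\<dots> \<le> (\<Sum>j<n. x ^ k * c * \<bar>v j\<bar>)"
      using entry i by (intro sum_mono mult_right_mono) auto
    also have "\<dots> = c * (\<Sum>j<n. \<bar>v j\<bar>) * x ^ k"
      by (simp add: sum_distrib_left mult_ac)
    finally show "\<bar>(matvec n a ^^ k) v i\<bar> \<le> c * (\<Sum>j<n. \<bar>v j\<bar>) * x ^ k" .
  qed
qed

lemma eigenvector_spectral_radius:
  assumes n: "0 < n"
  shows "\<exists>\<mu> z i\<^sub>0. i\<^sub>0 < n \<and> z i\<^sub>0 \<noteq> 0 \<and> cmod \<mu> = spectral_radius (complex_mat n a) \<and>
    (\<forall>i<n. (\<Sum>j<n. complex_of_real (a i j) * z j) = \<mu> * z i)"
proof -
  let ?A = "complex_mat n a"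
  obtain \<mu> where \<mu>: "\<mu> \<in> spectrum ?A" and r: "spectral_radius ?A = cmod \<mu>"
    using spectral_radius_mem_max(1)[OF complex_mat_carrier n] by auto
  then obtain v where "eigenvector ?A v \<mu>"
    unfolding spectrum_def eigenvalue_def by auto
  then have v: "v \<in> carrier_vec n" "v \<noteq> 0\<^sub>v n" and Av: "?A *\<^sub>v v = \<mu> \<cdot>\<^sub>v v"
    unfolding eigenvector_def by auto
  have "\<exists>i<n. v $ i \<noteq> 0"
  proof (rule ccontr)
    assume "\<not> ?thesis"
    then have "v = 0\<^sub>v n"
      using v(1) by (intro eq_vecI) auto
    with v(2) show False
      by simp
  qed
  then obtain i\<^sub>0 where i\<^sub>0: "i\<^sub>0 < n" "v $ i\<^sub>0 \<noteq> 0"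
    by blast
  have "(\<Sum>j<n. complex_of_real (a i j) * v $ j) = \<mu> * v $ i" if i: "i < n" for i
  proof -
    have "(\<Sum>j<n. complex_of_real (a i j) * v $ j) = (?A *\<^sub>v v) $ i"
      using i v by (auto simp: scalar_prod_def atLeast0LessThan intro!: sum.cong)
    also have "\<dots> = \<mu> * v $ i"
      using Av i v by simp
    finally show ?thesis .
  qed
  then show ?thesis
    using i\<^sub>0 r by (intro exI[of _ \<mu>] exI[of _ "\<lambda>j. v $ j"] exI[of _ i\<^sub>0]) auto
qed

lemma matvec_Re_Im_eigenvector:
  assumes ev: "\<And>i. i < n \<Longrightarrow> (\<Sum>j<n. complex_of_real (a i j) * z j) = \<mu> * z i" and i: "i < n"
  shows "matvec n a (\<lambda>j. Re (z j)) i = Re \<mu> * Re (z i) - Im \<mu> * Im (z i)"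
    and "matvec n a (\<lambda>j. Im (z j)) i = Im \<mu> * Re (z i) + Re \<mu> * Im (z i)"
  using arg_cong[OF ev[OF i], of Re] arg_cong[OF ev[OF i], of Im]
  by (simp_all add: matvec_def Re_sum Im_sum)

lemma symmetric_eigenvalue_real:
  assumes sym: "symmetric_on n a"
    and ev: "\<And>i. i < n \<Longrightarrow> (\<Sum>j<n. complex_of_real (a i j) * z j) = \<mu> * z i"
    and i\<^sub>0: "i\<^sub>0 < n" "z i\<^sub>0 \<noteq> 0"
  shows "Im \<mu> = 0"
proof -
  define p where "p = (\<lambda>i. Re (z i))"
  define q where "q = (\<lambda>i. Im (z i))"
  have "dot n q (matvec n a p) = dot n q (\<lambda>i. Re \<mu> * p i - Im \<mu> * q i)"
    by (rule dot_cong) (simp_all add: p_def q_def matvec_Re_Im_eigenvector[OF ev])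
  also have "\<dots> = Re \<mu> * dot n q p - Im \<mu> * dot n q q"
    by (simp add: dot_def algebra_simps sum_subtractf sum_distrib_left)
  finally have qAp: "dot n q (matvec n a p) = Re \<mu> * dot n q p - Im \<mu> * dot n q q" .
  have "dot n p (matvec n a q) = dot n p (\<lambda>i. Im \<mu> * p i + Re \<mu> * q i)"
    by (rule dot_cong) (simp_all add: p_def q_def matvec_Re_Im_eigenvector[OF ev])
  also have "\<dots> = Im \<mu> * dot n p p + Re \<mu> * dot n p q"
    by (simp add: dot_def algebra_simps sum.distrib sum_distrib_left)
  finally have pAq: "dot n p (matvec n a q) = Im \<mu> * dot n p p + Re \<mu> * dot n p q" .
  have "dot n q (matvec n a p) = dot n p (matvec n a q)"
    using dot_matvec_symmetric[OF sym, of p q] dot_commute[of n q "matvec n a p"] by simp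
  then have "Im \<mu> * (dot n p p + dot n q q) = 0"
    using qAp pAq dot_commute[of n p q] by (simp add: algebra_simps)
  moreover have "0 < dot n p p + dot n q q"
  proof (cases "p i\<^sub>0 = 0")
    case True
    then have "q i\<^sub>0 \<noteq> 0"
      using i\<^sub>0(2) by (simp add: p_def q_def complex_eq_iff)
    then show ?thesis
      using dot_self_pos[OF i\<^sub>0(1)] dot_self_nonneg[of n p] by (smt (verit))
  next
    case False
    then show ?thesis
      using dot_self_pos[OF i\<^sub>0(1)] dot_self_nonneg[of n q] by (smt (verit))
  qed
  ultimately show ?thesis
    by simp
qed

lemma real_eigenvector_of_symmetric:
  assumes sym: "symmetric_on n a"
    and ev: "\<And>i. i < n \<Longrightarrow> (\<Sum>j<n. complex_of_real (a i j) * z j) = \<mu> * z i"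
    and i\<^sub>0: "i\<^sub>0 < n" "z i\<^sub>0 \<noteq> 0"
  shows "\<exists>e i\<^sub>1. i\<^sub>1 < n \<and> e i\<^sub>1 \<noteq> 0 \<and> (\<forall>i<n. matvec n a e i = Re \<mu> * e i)"
proof -
  note Im = symmetric_eigenvalue_real[OF sym ev i\<^sub>0]
  show ?thesis
  proof (cases "Re (z i\<^sub>0) = 0")
    case True
    then have "Im (z i\<^sub>0) \<noteq> 0"
      using i\<^sub>0(2) by (simp add: complex_eq_iff)
    with i\<^sub>0(1) Im matvec_Re_Im_eigenvector(2)[OF ev] show ?thesis
      by (intro exI[of _ "\<lambda>j. Im (z j)"] exI[of _ i\<^sub>0]) auto
  next
    case False
    with i\<^sub>0(1) Im matvec_Re_Im_eigenvector(1)[OF ev] show ?thesis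
      by (intro exI[of _ "\<lambda>j. Re (z j)"] exI[of _ i\<^sub>0]) auto
  qed
qed

lemma symmetric_bounded_spectral_radius:
  assumes sym: "symmetric_on n a" and n: "0 < n"
  shows "symmetric_bounded n a (spectral_radius (complex_mat n a))"
proof
  show "symmetric_on n a"
    by (fact sym)
  show nonneg: "0 \<le> spectral_radius (complex_mat n a)"
    using complex_mat_carrier n by (rule spectral_radius_nonneg)
  show "dot n (matvec n a v) (matvec n a v) \<le> (spectral_radius (complex_mat n a))\<^sup>2 * dot n v v" for v
    using sym nonneg iterate_matvec_growth[OF n] by (rule norm_bound_of_iterate_growth)
qed

lemma perron_eigenvector:
  assumes sym: "symmetric_on n a" and n: "0 < n" and nonneg: "\<And>i j. i < n \<Longrightarrow> j < n \<Longrightarrow> 0 \<le> a i j"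
  shows "\<exists>p. (\<forall>i<n. 0 \<le> p i) \<and> (\<exists>i<n. 0 < p i) \<and>
    (\<forall>i<n. matvec n a p i = spectral_radius (complex_mat n a) * p i)"
proof -
  interpret symmetric_bounded n a "spectral_radius (complex_mat n a)"
    using sym n by (rule symmetric_bounded_spectral_radius)
  obtain \<mu> z i\<^sub>0 where i\<^sub>0: "i\<^sub>0 < n" "z i\<^sub>0 \<noteq> 0" and \<mu>: "cmod \<mu> = spectral_radius (complex_mat n a)"
    and ev: "\<forall>i<n. (\<Sum>j<n. complex_of_real (a i j) * z j) = \<mu> * z i"
    using eigenvector_spectral_radius[OF n] by blast
  obtain e i\<^sub>1 where e: "i\<^sub>1 < n" "e i\<^sub>1 \<noteq> 0"
    and ev': "\<And>i. i < n \<Longrightarrow> matvec n a e i = Re \<mu> * e i"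
    using real_eigenvector_of_symmetric[OF sym ev[rule_format] i\<^sub>0] by blast
  have "\<bar>Re \<mu>\<bar> = spectral_radius (complex_mat n a)"
    using \<mu> symmetric_eigenvalue_real[OF sym ev[rule_format] i\<^sub>0] by (simp add: cmod_eq_Re)
  with abs_eigenvector[OF nonneg ev'] e show ?thesis
    by (intro exI[of _ "\<lambda>i. \<bar>e i\<bar>"]) auto
qed

section \<open>Adjacency matrices and the join with an edgeless graph\<close>

definition adj :: "(nat \<Rightarrow> nat \<Rightarrow> bool) \<Rightarrow> nat \<Rightarrow> nat \<Rightarrow> real" where
  "adj E i j = (if E i j then 1 else 0)"

lemma adj_matrix_eq: "adj_matrix n E = mat n n (\<lambda>(i, j). adj E i j)"
  by (simp add: adj_matrix_def adj_def)

lemma graph_spectral_radius_eq: "graph_spectral_radius n E = spectral_radius (complex_mat n (adj E))"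
  unfolding graph_spectral_radius_def adj_matrix_eq complex_mat_def
  by (rule arg_cong[where f = spectral_radius]) (auto intro!: eq_matI)

lemma symmetric_adj: "simple_graph n E \<Longrightarrow> symmetric_on n (adj E)"
  by (auto simp: simple_graph_def symmetric_on_def adj_def)

lemma simple_graph_join_edgeless:
  assumes "simple_graph n E"
  shows "simple_graph (s + n) (join_edgeless s E)"
  unfolding simple_graph_def
proof (intro conjI allI impI)
  fix i j assume ij: "i < s + n" "j < s + n"
  have "E (i - s) (j - s) \<longleftrightarrow> E (j - s) (i - s)" if "s \<le> i" "s \<le> j"
  proof -
    have "i - s < n" "j - s < n"
      using ij that by auto
    then show ?thesis
      using assms unfolding simple_graph_def by blast
  qed
  then show "join_edgeless s E i j \<longleftrightarrow> join_edgeless s E j i"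
    unfolding join_edgeless_def by auto
next
  fix i assume "i < s + n"
  then show "\<not> join_edgeless s E i i"
    using assms unfolding simple_graph_def join_edgeless_def by auto
qed

lemma simple_graph_symmetric_bounded:
  assumes "simple_graph n E" and "0 < n"
  shows "symmetric_bounded n (adj E) (graph_spectral_radius n E)"
  unfolding graph_spectral_radius_eq
  using symmetric_adj[OF assms(1)] assms(2) by (rule symmetric_bounded_spectral_radius)

lemma simple_graph_perron:
  assumes "simple_graph n E" and "0 < n"
  shows "\<exists>p. (\<forall>i<n. 0 \<le> p i) \<and> (\<exists>i<n. 0 < p i) \<and>
    (\<forall>i<n. matvec n (adj E) p i = graph_spectral_radius n E * p i)"
  unfolding graph_spectral_radius_eq
  using symmetric_adj[OF assms(1)] assms(2) by (rule perron_eigenvector) (simp add: adj_def)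

lemma coronal_eq_resolvent_sum:
  assumes "symmetric_bounded n (adj E) r" and x: "r < x"
    and w: "\<And>i. i < n \<Longrightarrow> x * w i - matvec n (adj E) w i = 1"
  shows "coronal n E x = (\<Sum>i<n. w i)"
proof -
  interpret symmetric_bounded n "adj E" r
    by fact
  define v where "v = (\<lambda>k. \<Sum>j<n. mat_inv n (x \<cdot>\<^sub>m 1\<^sub>m n - adj_matrix n E) $$ (k, j))"
  have "x * v i - matvec n (adj E) v i = 1" if "i < n" for i
    using mat_inv_row_sums_solve[OF x that] by (simp add: v_def adj_matrix_eq)
  then have "v i = w i" if "i < n" for i
    using resolvent_unique[OF x _ w that] by blast
  then show ?thesis
    by (simp add: coronal_def v_def)
qed

lemma matvec_join_edgeless_left:
  assumes "i < s"
  shows "matvec (s + n) (adj (join_edgeless s E)) v i = (\<Sum>j<n. v (s + j))"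
  using assms by (simp add: matvec_def sum_lessThan_add_split adj_def join_edgeless_def)

lemma matvec_join_edgeless_right:
  "matvec (s + n) (adj (join_edgeless s E)) v (s + i) = (\<Sum>j<s. v j) + matvec n (adj E) (\<lambda>j. v (s + j)) i"
  by (simp add: matvec_def sum_lessThan_add_split adj_def join_edgeless_def)

lemma coronal_div_strict_decreasing:
  assumes G: "simple_graph n E" and n: "0 < n"
    and x: "graph_spectral_radius n E < x" and xy: "x < y"
  shows "coronal n E y / y < coronal n E x / x"
proof -
  note bounded = simple_graph_symmetric_bounded[OF G n]
  interpret symmetric_bounded n "adj E" "graph_spectral_radius n E"
    by (fact bounded)
  have y: "graph_spectral_radius n E < y"
    using x xy by simp
  obtain u where u: "\<And>i. i < n \<Longrightarrow> x * u i - matvec n (adj E) u i = 1"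
    using resolvent_exists[OF x] by blast
  obtain z where z: "\<And>i. i < n \<Longrightarrow> y * z i - matvec n (adj E) z i = 1"
    using resolvent_exists[OF y] by blast
  have x0: "0 < x"
    using bound_nonneg x by simp
  have "(\<Sum>i<n. z i) / y < (\<Sum>i<n. u i) / y"
    using resolvent_sum_strict_decreasing[OF x xy n u z] x0 xy by (intro divide_strict_right_mono) auto
  also have "\<dots> \<le> (\<Sum>i<n. u i) / x"
    using resolvent_sum_pos[OF x u n] x0 xy by (intro divide_left_mono) auto
  finally show ?thesis
    using coronal_eq_resolvent_sum[OF bounded x u] coronal_eq_resolvent_sum[OF bounded y z] by simp
qed

lemma coronal_le:
  assumes G: "simple_graph n E" and n: "0 < n" and x: "graph_spectral_radius n E < x"
  shows "coronal n E x \<le> real n / (x - graph_spectral_radius n E)"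
proof -
  note bounded = simple_graph_symmetric_bounded[OF G n]
  interpret symmetric_bounded n "adj E" "graph_spectral_radius n E"
    by (fact bounded)
  obtain w where w: "\<And>i. i < n \<Longrightarrow> x * w i - matvec n (adj E) w i = 1"
    using resolvent_exists[OF x] by blast
  show ?thesis
    using resolvent_sum_le[OF x w n] coronal_eq_resolvent_sum[OF bounded x w] by simp
qed

lemma dot_join_edgeless_test_vector:
  fixes s :: nat and e :: real
  assumes pev: "\<And>i. i < n \<Longrightarrow> matvec n (adj E) p i = r * p i"
  defines "v \<equiv> \<lambda>i. if i < s then e else p (i - s)"
  shows "dot (s + n) v (matvec (s + n) (adj (join_edgeless s E)) v)
      = 2 * real s * e * (\<Sum>i<n. p i) + r * dot n p p"
    and "dot (s + n) v v = real s * e\<^sup>2 + dot n p p"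
proof -
  have v_low: "v i = e" if "i < s" for i
    using that by (simp add: v_def)
  have v_high: "v (s + i) = p i" for i
    by (simp add: v_def)
  have Bv: "matvec (s + n) (adj (join_edgeless s E)) v (s + i) = real s * e + r * p i" if "i < n" for i
    using pev that by (simp add: matvec_join_edgeless_right v_low v_high)
  have "dot (s + n) v (matvec (s + n) (adj (join_edgeless s E)) v)
      = (\<Sum>i<s. e * (\<Sum>j<n. p j)) + (\<Sum>i<n. p i * (real s * e + r * p i))"
    unfolding dot_def sum_lessThan_add_split
    by (intro arg_cong2[where f = "(+)"] sum.cong refl) (auto simp: v_low v_high matvec_join_edgeless_left Bv)
  also have "\<dots> = 2 * real s * e * (\<Sum>i<n. p i) + r * dot n p p"
    by (simp add: dot_def sum.distrib sum_distrib_left algebra_simps)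
  finally show "dot (s + n) v (matvec (s + n) (adj (join_edgeless s E)) v)
      = 2 * real s * e * (\<Sum>i<n. p i) + r * dot n p p" .
  show "dot (s + n) v v = real s * e\<^sup>2 + dot n p p"
    by (simp add: dot_def sum_lessThan_add_split v_low v_high power2_eq_square)
qed

lemma graph_spectral_radius_lt_join:
  assumes G: "simple_graph n E" and n: "0 < n" and s: "0 < s"
  shows "graph_spectral_radius n E < graph_spectral_radius (s + n) (join_edgeless s E)"
proof (rule ccontr)
  let ?r = "graph_spectral_radius n E" and ?r' = "graph_spectral_radius (s + n) (join_edgeless s E)"
  interpret J: symmetric_bounded "s + n" "adj (join_edgeless s E)" ?r'
    using simple_graph_join_edgeless[OF G] n by (intro simple_graph_symmetric_bounded) auto
  have r0: "0 \<le> ?r"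
    using simple_graph_symmetric_bounded[OF G n] by (rule symmetric_bounded.bound_nonneg)
  obtain p where p0: "\<forall>i<n. 0 \<le> p i" and ppos: "\<exists>i<n. 0 < p i"
    and pev: "\<forall>i<n. matvec n (adj E) p i = ?r * p i"
    using simple_graph_perron[OF G n] by blast
  define S where "S = (\<Sum>i<n. p i)"
  obtain i\<^sub>0 where "i\<^sub>0 < n" and "0 < p i\<^sub>0"
    using ppos by blast
  then have S0: "0 < S"
    unfolding S_def using p0 by (intro sum_pos2[of "{..<n}" i\<^sub>0]) auto
  define e where "e = S / (?r + 1)"
  have e0: "0 < e"
    using S0 r0 by (simp add: e_def)
  have small: "?r * e < S"
    using S0 r0 by (simp add: e_def field_simps)
  define v where "v = (\<lambda>i. if i < s then e else p (i - s))"
  assume "\<not> ?r < ?r'"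
  then have "dot (s + n) v (matvec (s + n) (adj (join_edgeless s E)) v) \<le> ?r * dot (s + n) v v"
    using J.abs_dot_matvec_le[of v] mult_right_mono[OF _ dot_self_nonneg, of ?r' ?r "s + n" v]
    by (simp add: abs_le_iff)
  then have "real s * e * (2 * S) \<le> real s * e * (?r * e)"
    using dot_join_edgeless_test_vector[where s = s and e = e, OF pev[rule_format], folded v_def]
    by (simp add: S_def algebra_simps power2_eq_square)
  then have "2 * S \<le> ?r * e"
    using s e0 by (simp add: mult_le_cancel_left_pos)
  with small S0 show False
    by simp
qed

lemma join_eigenvector_equations:
  assumes ev: "\<forall>i<s + n. matvec (s + n) (adj (join_edgeless s E)) P i = \<rho> * P i"
  shows "i < s \<Longrightarrow> \<rho> * P i = (\<Sum>j<n. P (s + j))"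
    and "j < n \<Longrightarrow> \<rho> * P (s + j) - matvec n (adj E) (\<lambda>j. P (s + j)) j = (\<Sum>i<s. P i)"
  using ev[rule_format, of i] ev[rule_format, of "s + j"]
  by (simp_all add: matvec_join_edgeless_left matvec_join_edgeless_right)

lemma join_perron_mass_pos:
  assumes G: "simple_graph n E" and n: "0 < n"
    and gt: "graph_spectral_radius n E < \<rho>" and P0: "\<forall>i<s + n. 0 \<le> P i" and Ppos: "\<exists>i<s + n. 0 < P i"
    and ev: "\<forall>i<s + n. matvec (s + n) (adj (join_edgeless s E)) P i = \<rho> * P i"
  shows "0 < (\<Sum>i<s. P i)"
proof -
  interpret symmetric_bounded n "adj E" "graph_spectral_radius n E"
    using G n by (rule simple_graph_symmetric_bounded)
  have "(\<Sum>i<s. P i) \<noteq> 0"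
  proof
    assume c: "(\<Sum>i<s. P i) = 0"
    have low: "P (s + j) = 0" if "j < n" for j
      using shift_kernel_trivial[OF gt _ that, of "\<lambda>j. P (s + j)"] join_eigenvector_equations(2)[OF ev] c
      by simp
    have "P i = 0" if "i < s + n" for i
    proof (cases "i < s")
      case True
      have "\<rho> * P i = 0"
        using join_eigenvector_equations(1)[OF ev True] low by simp
      then show ?thesis
        using gt bound_nonneg by simp
    next
      case False
      then show ?thesis
        using low[of "i - s"] that by simp
    qed
    with Ppos show False
      by force
  qed
  moreover have "0 \<le> (\<Sum>i<s. P i)"
    using P0 by (intro sum_nonneg) auto
  ultimately show ?thesis
    by simp
qed

lemma coronal_join_spectral_radius:
  assumes G: "simple_graph n E" and n: "0 < n" and s: "0 < s"
  defines "\<rho> \<equiv> graph_spectral_radius (s + n) (join_edgeless s E)"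
  shows "real s * coronal n E \<rho> = \<rho>"
proof -
  have gt: "graph_spectral_radius n E < \<rho>"
    unfolding \<rho>_def using G n s by (rule graph_spectral_radius_lt_join)
  have "\<exists>P. (\<forall>i<s + n. 0 \<le> P i) \<and> (\<exists>i<s + n. 0 < P i) \<and>
      (\<forall>i<s + n. matvec (s + n) (adj (join_edgeless s E)) P i = \<rho> * P i)"
    unfolding \<rho>_def using simple_graph_join_edgeless[OF G] n by (intro simple_graph_perron) auto
  then obtain P where P0: "\<forall>i<s + n. 0 \<le> P i" and Ppos: "\<exists>i<s + n. 0 < P i"
    and ev: "\<forall>i<s + n. matvec (s + n) (adj (join_edgeless s E)) P i = \<rho> * P i"
    by blast
  define T where "T = (\<Sum>j<n. P (s + j))"
  define c where "c = (\<Sum>i<s. P i)"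
  have c0: "0 < c"
    unfolding c_def using G n gt P0 Ppos ev by (rule join_perron_mass_pos)
  \<comment> \<open>restricted to G, the Perron vector of the join is c times the solution of (\<rho> I - A) w = 1\<close>
  have "\<rho> * (P (s + j) / c) - matvec n (adj E) (\<lambda>j. P (s + j) / c) j = 1" if "j < n" for j
  proof -
    have "matvec n (adj E) (\<lambda>j. P (s + j) / c) j = matvec n (adj E) (\<lambda>j. P (s + j)) j / c"
      by (simp add: matvec_def sum_divide_distrib)
    then show ?thesis
      using join_eigenvector_equations(2)[OF ev that] c0 by (simp add: c_def diff_divide_distrib[symmetric])
  qed
  then have "coronal n E \<rho> = (\<Sum>j<n. P (s + j) / c)"
    by (rule coronal_eq_resolvent_sum[OF simple_graph_symmetric_bounded[OF G n] gt])
  also have "\<dots> = T / c"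
    by (simp add: T_def sum_divide_distrib)
  finally have chi: "coronal n E \<rho> = T / c" .
  have "\<rho> * c = (\<Sum>i<s. \<rho> * P i)"
    by (simp add: c_def sum_distrib_left)
  also have "\<dots> = real s * T"
    using join_eigenvector_equations(1)[OF ev] by (simp add: T_def)
  finally have "\<rho> * c = real s * T" .
  with chi have "real s * coronal n E \<rho> = \<rho> * c / c"
    by simp
  with c0 show ?thesis
    by simp
qed

lemma join_spectral_radius_quadratic_le:
  assumes G: "simple_graph n E" and n: "0 < n" and s: "0 < s"
  defines "r \<equiv> graph_spectral_radius n E" and "\<rho> \<equiv> graph_spectral_radius (s + n) (join_edgeless s E)"
  shows "\<rho> * (\<rho> - r) \<le> real n * real s"
proof -
  have gt: "r < \<rho>"
    unfolding r_def \<rho>_def using G n s by (rule graph_spectral_radius_lt_join)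
  have "coronal n E \<rho> = \<rho> / real s"
    using coronal_join_spectral_radius[OF G n s] s by (simp add: \<rho>_def eq_divide_eq mult.commute)
  then have "\<rho> / real s \<le> real n / (\<rho> - r)"
    using coronal_le[OF G n gt[unfolded r_def]] by (simp add: r_def)
  then show ?thesis
    using gt s by (simp add: field_simps)
qed

lemma sum_adj_eq_degree: "(\<Sum>j<n. adj E i j) = real (card {j. j < n \<and> E i j})"
proof -
  have "(\<Sum>j<n. adj E i j) = real (card ({..<n} \<inter> {j. E i j}))"
    by (simp add: adj_def sum.If_cases)
  also have "{..<n} \<inter> {j. E i j} = {j. j < n \<and> E i j}"
    by auto
  finally show ?thesis .
qed

lemma graph_spectral_radius_le_degree:
  assumes G: "simple_graph n E" and n: "0 < n"
    and deg: "\<And>i. i < n \<Longrightarrow> card {j. j < n \<and> E i j} \<le> k"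
  shows "graph_spectral_radius n E \<le> real k"
proof -
  let ?r = "graph_spectral_radius n E"
  obtain p where p0: "\<forall>i<n. 0 \<le> p i" and ppos: "\<exists>i<n. 0 < p i"
    and pev: "\<forall>i<n. matvec n (adj E) p i = ?r * p i"
    using simple_graph_perron[OF G n] by blast
  \<comment> \<open>evaluate A p = r p at a largest entry of the Perron vector p\<close>
  define m where "m = Max (p ` {..<n})"
  have "m \<in> p ` {..<n}"
    unfolding m_def using n by (intro Max_in) auto
  then obtain i\<^sub>m where i\<^sub>m: "i\<^sub>m < n" "p i\<^sub>m = m"
    by auto
  have p_le: "p j \<le> m" if "j < n" for j
    unfolding m_def using that by (intro Max_ge) auto
  obtain i\<^sub>0 where "i\<^sub>0 < n" and "0 < p i\<^sub>0"
    using ppos by blast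
  with p_le have m0: "0 < m"
    by (meson order.strict_trans2)
  have "?r * m = (\<Sum>j<n. adj E i\<^sub>m j * p j)"
    using pev i\<^sub>m by (simp add: matvec_def)
  also have "\<dots> \<le> (\<Sum>j<n. adj E i\<^sub>m j) * m"
    using p_le by (auto simp: sum_distrib_right adj_def intro!: sum_mono)
  also have "\<dots> \<le> real k * m"
    using deg[OF i\<^sub>m(1)] m0 by (simp add: sum_adj_eq_degree)
  finally show ?thesis
    using m0 by simp
qed

lemma degree_le_graph_spectral_radius:
  assumes G: "simple_graph n E" and n: "0 < n"
    and deg: "\<And>i. i < n \<Longrightarrow> card {j. j < n \<and> E i j} = k"
  shows "real k \<le> graph_spectral_radius n E"
proof -
  let ?r = "graph_spectral_radius n E"
  interpret symmetric_bounded n "adj E" ?r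
    using G n by (rule simple_graph_symmetric_bounded)
  have row: "(\<Sum>j<n. adj E i j) = real k" if "i < n" for i
    using deg[OF that] by (simp add: sum_adj_eq_degree)
  have "real n * (real k)\<^sup>2 = dot n (matvec n (adj E) (\<lambda>_. 1)) (matvec n (adj E) (\<lambda>_. 1))"
    by (simp add: dot_def matvec_def row power2_eq_square)
  also have "\<dots> \<le> real n * ?r\<^sup>2"
    using norm_bound[of "\<lambda>_. 1"] by (simp add: dot_def mult.commute)
  finally have "(real k)\<^sup>2 \<le> ?r\<^sup>2"
    using n by (simp add: mult_le_cancel_left_pos)
  then show ?thesis
    using bound_nonneg by (rule power2_le_imp_le)
qed

lemma coronal_regular:
  assumes G: "simple_graph n E" and n: "0 < n" and reg: "regular_graph n E"
    and x: "graph_spectral_radius n E < x"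
  shows "coronal n E x = real n / (x - graph_spectral_radius n E)"
proof -
  obtain k where deg: "\<And>i. i < n \<Longrightarrow> card {j. j < n \<and> E i j} = k"
    using reg unfolding regular_graph_def by blast
  have "graph_spectral_radius n E \<le> real k"
    using deg by (intro graph_spectral_radius_le_degree[OF G n]) simp
  with degree_le_graph_spectral_radius[OF G n deg] have rad: "graph_spectral_radius n E = real k"
    by simp
  have "x * (1 / (x - real k)) - matvec n (adj E) (\<lambda>_. 1 / (x - real k)) i = 1" if "i < n" for i
  proof -
    have "matvec n (adj E) (\<lambda>_. 1 / (x - real k)) i = real k / (x - real k)"
      using deg[OF that] by (simp add: matvec_def sum_divide_distrib[symmetric] sum_adj_eq_degree)
    then show ?thesis
      using x rad by (simp add: field_simps)
  qed
  then have "coronal n E x = (\<Sum>i<n. 1 / (x - real k))"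
    using simple_graph_symmetric_bounded[OF G n] x by (intro coronal_eq_resolvent_sum)
  then show ?thesis
    using rad by simp
qed

lemma join_spectral_radius_quadratic_regular:
  assumes G: "simple_graph n E" and n: "0 < n" and s: "0 < s" and reg: "regular_graph n E"
  defines "r \<equiv> graph_spectral_radius n E" and "\<rho> \<equiv> graph_spectral_radius (s + n) (join_edgeless s E)"
  shows "\<rho> * (\<rho> - r) = real n * real s"
proof -
  have gt: "r < \<rho>"
    unfolding r_def \<rho>_def using G n s by (rule graph_spectral_radius_lt_join)
  have "coronal n E \<rho> = \<rho> / real s"
    using coronal_join_spectral_radius[OF G n s] s by (simp add: \<rho>_def eq_divide_eq mult.commute)
  then have "\<rho> / real s = real n / (\<rho> - r)"
    using coronal_regular[OF G n reg gt[unfolded r_def]] by (simp add: r_def)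
  then show ?thesis
    using gt s by (simp add: field_simps)
qed

lemma le_quadratic_root:
  fixes x l a b :: real
  assumes "x * (x - l) \<le> a * b"
  shows "x \<le> (l + sqrt (l\<^sup>2 + 4 * a * b)) / 2"
proof -
  have "(2 * x - l)\<^sup>2 \<le> l\<^sup>2 + 4 * a * b"
    using assms by (simp add: power2_eq_square algebra_simps)
  then have "2 * x - l \<le> sqrt (l\<^sup>2 + 4 * a * b)"
    by (rule real_le_rsqrt)
  then show ?thesis
    by simp
qed

lemma eq_quadratic_root:
  fixes x l a b :: real
  assumes "x * (x - l) = a * b" and "l \<le> 2 * x"
  shows "x = (l + sqrt (l\<^sup>2 + 4 * a * b)) / 2"
proof -
  have "(2 * x - l)\<^sup>2 = l\<^sup>2 + 4 * a * b"
    using assms(1) by (simp add: power2_eq_square algebra_simps)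
  then have "sqrt (l\<^sup>2 + 4 * a * b) = 2 * x - l"
    using assms(2) by (intro real_sqrt_unique) auto
  then show ?thesis
    by simp
qed

theorem lemma3p2:
  fixes n s :: nat and E :: "nat \<Rightarrow> nat \<Rightarrow> bool"
  assumes "n \<ge> 1" and "s \<ge> 1" and "simple_graph n E"
  defines "lam \<equiv> graph_spectral_radius n E"
      and "beta \<equiv> (\<lambda>x. real s / x * coronal n E x)"
      and "lamJ \<equiv> graph_spectral_radius (s + n) (join_edgeless s E)"
  shows "(\<forall>x y. lam < x \<longrightarrow> x < y \<longrightarrow> beta y < beta x)
         \<and> lamJ > lam \<and> beta lamJ = 1
         \<and> (\<forall>x. lam < x \<longrightarrow> beta x = 1 \<longrightarrow> x = lamJ)
         \<and> lamJ \<le> (lam + sqrt (lam ^ 2 + 4 * real n * real s)) / 2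
         \<and> (regular_graph n E \<longrightarrow> lamJ = (lam + sqrt (lam ^ 2 + 4 * real n * real s)) / 2)"
proof -
  have G: "simple_graph n E" and n: "0 < n" and s: "0 < s"
    using assms(1-3) by auto
  have lam0: "0 \<le> lam"
    unfolding lam_def using simple_graph_symmetric_bounded[OF G n] by (rule symmetric_bounded.bound_nonneg)
  have gt: "lam < lamJ"
    unfolding lam_def lamJ_def using G n s by (rule graph_spectral_radius_lt_join)
  have beta1: "beta lamJ = 1"
    using coronal_join_spectral_radius[OF G n s] gt lam0 s unfolding lamJ_def beta_def by simp
  have mono: "beta y < beta x" if "lam < x" and "x < y" for x y
    using coronal_div_strict_decreasing[OF G n, of x y] that s
    unfolding lam_def beta_def by (simp add: mult_strict_left_mono flip: times_divide_eq_right)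
  moreover have "x = lamJ" if "lam < x" and "beta x = 1" for x
    using mono[of x lamJ] mono[of lamJ x] that gt beta1 by (cases x lamJ rule: linorder_cases) auto
  moreover have "lamJ \<le> (lam + sqrt (lam ^ 2 + 4 * real n * real s)) / 2"
    using join_spectral_radius_quadratic_le[OF G n s] unfolding lam_def lamJ_def by (rule le_quadratic_root)
  moreover have "lamJ = (lam + sqrt (lam ^ 2 + 4 * real n * real s)) / 2" if "regular_graph n E"
    using join_spectral_radius_quadratic_regular[OF G n s that] gt lam0
    unfolding lam_def lamJ_def by (intro eq_quadratic_root) auto
  ultimately show ?thesis
    using gt beta1 by blast
qed

end
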